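(* Let $X$ be a nonempty compact convex subset of $\mathbb{R}^n$, let $\varphi:X\to\mathbb{R}$ be upper semicontinuous and strongly concave on $X$ with modulus $c>0$, and let $\psi:X\to\mathbb{R}$ be Lipschitz continuous with constant $L_\psi$ with respect to the Euclidean norm. Then $\varphi$ attains its maximum on $X$ at a unique point $x_0$, and for every $\delta\geq0$, \[ \Big|\sup_{x\in X}\big(\varphi(x)+\delta\psi(x)\big)-\big(\varphi(x_0)+\delta\psi(x_0)\big)\Big|\leq L_\psi\,\delta\sqrt{\frac{2\delta M}{c}}, \] where $M=\sup_X\psi-\inf_X\psi$.
   Context: $\varphi$ is strongly concave on $X$ with modulus $c$ if $-\varphi-\frac c2\|\cdot\|_2^2$ is convex on $X$. *)

theory Defs
  imports "HOL-Analysis.Analysis"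
begin

definition usc_on :: "'a::metric_space set \<Rightarrow> ('a \<Rightarrow> real) \<Rightarrow> bool" where
  "usc_on S f \<longleftrightarrow> (\<forall>x\<in>S. \<forall>a. f x < a \<longrightarrow>
      (\<exists>e>0. \<forall>y\<in>S. dist y x < e \<longrightarrow> f y < a))"

definition strongly_concave_on :: "'a::real_normed_vector set \<Rightarrow> real \<Rightarrow> ('a \<Rightarrow> real) \<Rightarrow> bool" where
  "strongly_concave_on S c f \<longleftrightarrow> convex_on S (\<lambda>x. - f x - c / 2 * (norm x)\<^sup>2)"

end

theory Submission
  imports Defs
begin

text \<open>
  Strong concavity makes the maximiser \<open>x0\<close> of \<open>\<phi>\<close> unique and gives quadratic growth
  \<open>c/2 \<parallel>x - x0\<parallel>\<^sup>2 \<le> \<phi> x0 - \<phi> x\<close>. A point at which \<open>\<phi> + \<delta>\<psi>\<close> is at least its value at \<open>x0\<close>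
  must therefore satisfy \<open>c/2 \<parallel>x - x0\<parallel>\<^sup>2 \<le> \<delta> (\<psi> x - \<psi> x0) \<le> \<delta> M\<close>, so it lies within
  \<open>\<surd>(2\<delta>M/c)\<close> of \<open>x0\<close>; there the Lipschitz bound limits the gain \<open>\<delta> (\<psi> x - \<psi> x0)\<close>
  to \<open>L \<delta> \<surd>(2\<delta>M/c)\<close>.
\<close>

lemma usc_on_iff_openin:
  "usc_on X f \<longleftrightarrow> (\<forall>a. openin (top_of_set X) {x\<in>X. f x < a})"
  unfolding usc_on_def openin_euclidean_subtopology_iff by blast

lemma usc_on_attains_max:
  fixes X :: "'a::metric_space set"
  assumes "X \<noteq> {}" "compact X" "usc_on X f"
  shows "\<exists>x0\<in>X. \<forall>x\<in>X. f x \<le> f x0"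
proof (rule ccontr)
  assume "\<not> ?thesis"
  then have no_max: "\<forall>x\<in>X. \<exists>y\<in>X. f x < f y"
    by (auto simp: not_le)
  let ?U = "\<lambda>y. {x\<in>X. f x < f y}"
  have "\<forall>u\<in>?U ` X. openin (top_of_set X) u" and "X \<subseteq> \<Union> (?U ` X)"
    using assms(3) no_max by (auto simp: usc_on_iff_openin)
  then obtain D where D: "D \<subseteq> ?U ` X" "finite D" "X \<subseteq> \<Union> D"
    using assms(2) unfolding compact_eq_openin_cover by meson
  then obtain Y where Y: "Y \<subseteq> X" "finite Y" "D = ?U ` Y"
    by (meson finite_subset_image)
  have "Y \<noteq> {}"
    using D(3) Y(3) assms(1) by auto
  then have "Max (f ` Y) \<in> f ` Y"
    using Y(2) by simp
  then obtain y where y: "y \<in> Y" "f y = Max (f ` Y)"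
    by (metis imageE)
  then have "y \<in> \<Union> (?U ` Y)"
    using D(3) Y by blast
  then obtain y' where "y' \<in> Y" "f y < f y'"
    by blast
  moreover have "f y' \<le> f y"
    using Y(2) y \<open>y' \<in> Y\<close> by simp
  ultimately show False
    by simp
qed

lemma norm_convex_combination_squared:
  fixes a b :: "'a::real_inner"
  shows "(norm ((1 - t) *\<^sub>R a + t *\<^sub>R b))\<^sup>2 =
    (1 - t) * (norm a)\<^sup>2 + t * (norm b)\<^sup>2 - t * (1 - t) * (norm (b - a))\<^sup>2"
  by (simp add: power2_norm_eq_inner inner_simps algebra_simps inner_commute)

lemma strongly_concave_onD:
  fixes X :: "'a::real_inner set"
  assumes "strongly_concave_on X c f" "x \<in> X" "y \<in> X" "0 \<le> t" "t \<le> 1"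
  shows "(1 - t) * f x + t * f y + c / 2 * t * (1 - t) * (norm (y - x))\<^sup>2
           \<le> f ((1 - t) *\<^sub>R x + t *\<^sub>R y)"
proof -
  have "- f ((1 - t) *\<^sub>R x + t *\<^sub>R y) - c / 2 * (norm ((1 - t) *\<^sub>R x + t *\<^sub>R y))\<^sup>2
          \<le> (1 - t) * (- f x - c / 2 * (norm x)\<^sup>2) + t * (- f y - c / 2 * (norm y)\<^sup>2)"
    using convex_onD[OF assms(1)[unfolded strongly_concave_on_def]] assms(2-) by blast
  then show ?thesis
    unfolding norm_convex_combination_squared by (simp add: field_simps)
qed

lemma strongly_concave_on_imp_convex:
  "strongly_concave_on X c f \<Longrightarrow> convex X"
  unfolding strongly_concave_on_def by (rule convex_on_imp_convex)

lemma strongly_concave_on_max_quadratic_growth: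
  fixes X :: "'a::real_inner set"
  assumes concave: "strongly_concave_on X c f"
    and max: "x0 \<in> X" "\<forall>x\<in>X. f x \<le> f x0" and x: "x \<in> X"
  shows "c / 2 * (norm (x - x0))\<^sup>2 \<le> f x0 - f x"
proof (rule field_le_mult_one_interval)
  \<comment> \<open>Strong concavity on the segment from \<open>x0\<close> to \<open>x\<close>, compared with the maximum \<open>f x0\<close>,
    gives the claim up to a factor \<open>1 - t\<close> for every \<open>t \<in> (0, 1]\<close>; here \<open>s = 1 - t\<close>.\<close>
  fix s :: real assume s: "0 < s" "s < 1"
  define t where "t = 1 - s"
  have t: "0 < t" "t \<le> 1"
    using s by (auto simp: t_def)
  have "(1 - t) *\<^sub>R x0 + t *\<^sub>R x \<in> X"
    using strongly_concave_on_imp_convex[OF concave] max(1) x t by (simp add: convex_alt)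
  then have "(1 - t) * f x0 + t * f x + c / 2 * t * (1 - t) * (norm (x - x0))\<^sup>2 \<le> f x0"
    using strongly_concave_onD[OF concave max(1) x, of t] t max(2) by fastforce
  then have "t * (s * (c / 2 * (norm (x - x0))\<^sup>2)) \<le> t * (f x0 - f x)"
    by (simp add: t_def algebra_simps)
  then show "s * (c / 2 * (norm (x - x0))\<^sup>2) \<le> f x0 - f x"
    using t by simp
qed

lemma strongly_concave_on_max_unique:
  fixes X :: "'a::real_inner set"
  assumes "strongly_concave_on X c f" "c > 0"
    and "x0 \<in> X" "\<forall>x\<in>X. f x \<le> f x0" "y \<in> X" "\<forall>x\<in>X. f x \<le> f y"
  shows "y = x0"
proof -
  have "c / 2 * (norm (y - x0))\<^sup>2 \<le> 0"
    using strongly_concave_on_max_quadratic_growth[of X c f x0 y] assms by fastforce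
  with \<open>c > 0\<close> show ?thesis
    by (simp add: mult_le_0_iff)
qed

lemma diff_le_SUP_minus_INF:
  fixes g :: "'a \<Rightarrow> real"
  assumes "bounded (g ` X)" "x \<in> X" "y \<in> X"
  shows "g x - g y \<le> (SUP x\<in>X. g x) - (INF x\<in>X. g x)"
proof -
  have "g x \<le> (SUP x\<in>X. g x)" "(INF x\<in>X. g x) \<le> g y"
    using assms by (auto intro: cSUP_upper cINF_lower bounded_imp_bdd_above bounded_imp_bdd_below)
  then show ?thesis
    by linarith
qed

lemma abs_cSUP_diff_le:
  fixes F :: "'a \<Rightarrow> real"
  assumes "x0 \<in> X" "\<forall>x\<in>X. F x \<le> F x0 + R"
  shows "\<bar>(SUP x\<in>X. F x) - F x0\<bar> \<le> R"
proof -
  have "bdd_above (F ` X)"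
    using assms(2) by (auto simp: bdd_above_def)
  then have "F x0 \<le> (SUP x\<in>X. F x)"
    by (rule cSUP_upper[OF assms(1)])
  moreover have "(SUP x\<in>X. F x) \<le> F x0 + R"
    using assms by (intro cSUP_least) auto
  ultimately show ?thesis
    by linarith
qed

context
  fixes X :: "'a::real_normed_vector set" and f g :: "'a \<Rightarrow> real" and x0 :: 'a and c M \<delta> :: real
  assumes growth: "\<forall>x\<in>X. c / 2 * (norm (x - x0))\<^sup>2 \<le> f x0 - f x"
    and osc: "\<forall>x\<in>X. g x - g x0 \<le> M"
    and c: "c > 0" and \<delta>: "\<delta> \<ge> 0"
begin

lemma perturbed_improvement_near_max:
  assumes "x \<in> X" "f x0 + \<delta> * g x0 \<le> f x + \<delta> * g x"
  shows "norm (x - x0) \<le> sqrt (2 * \<delta> * M / c)"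
proof -
  have "\<delta> * (g x - g x0) \<le> \<delta> * M"
    using osc assms(1) \<delta> by (simp add: mult_left_mono)
  with assms growth have "c / 2 * (norm (x - x0))\<^sup>2 \<le> \<delta> * M"
    by (force simp: algebra_simps)
  then have "(norm (x - x0))\<^sup>2 \<le> 2 * \<delta> * M / c"
    using c by (simp add: field_simps)
  then show ?thesis
    by (rule real_le_rsqrt)
qed

lemma perturbed_value_le:
  assumes lip: "lipschitz_on L X g" and "x0 \<in> X" "x \<in> X"
  shows "f x + \<delta> * g x \<le> f x0 + \<delta> * g x0 + L * \<delta> * sqrt (2 * \<delta> * M / c)"
proof (cases "f x0 + \<delta> * g x0 \<le> f x + \<delta> * g x")
  case True
  have "g x - g x0 \<le> L * norm (x - x0)"
    using lipschitz_onD[OF lip \<open>x \<in> X\<close> \<open>x0 \<in> X\<close>] by (simp add: dist_norm abs_le_iff)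
  also have "\<dots> \<le> L * sqrt (2 * \<delta> * M / c)"
    using perturbed_improvement_near_max[OF \<open>x \<in> X\<close> True] lipschitz_on_nonneg[OF lip]
    by (rule mult_left_mono)
  finally have "\<delta> * (g x - g x0) \<le> \<delta> * (L * sqrt (2 * \<delta> * M / c))"
    using \<delta> by (rule mult_left_mono)
  then have gain: "\<delta> * g x - \<delta> * g x0 \<le> L * \<delta> * sqrt (2 * \<delta> * M / c)"
    by (simp add: right_diff_distrib ac_simps)
  have "0 \<le> c / 2 * (norm (x - x0))\<^sup>2"
    using c by simp
  then have "f x \<le> f x0"
    using growth \<open>x \<in> X\<close> by fastforce
  with gain show ?thesis
    by linarith
next
  case False
  have "0 \<le> M"
    using osc \<open>x0 \<in> X\<close> by fastforce
  then have "0 \<le> L * \<delta> * sqrt (2 * \<delta> * M / c)"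
    using lipschitz_on_nonneg[OF lip] \<delta> c by simp
  with False show ?thesis
    by linarith
qed

end

theorem corollary5p13:
  fixes X :: "(real ^ 'n) set" and \<phi> \<psi> :: "real ^ 'n \<Rightarrow> real" and c L :: real
  assumes "X \<noteq> {}" and "compact X" and "convex X"
    and "usc_on X \<phi>" and "c > 0" and "strongly_concave_on X c \<phi>"
    and "lipschitz_on L X \<psi>"
  shows "\<exists>x0\<in>X. (\<forall>x\<in>X. \<phi> x \<le> \<phi> x0)
     \<and> (\<forall>y\<in>X. (\<forall>x\<in>X. \<phi> x \<le> \<phi> y) \<longrightarrow> y = x0)
     \<and> (\<forall>\<delta>::real. \<delta> \<ge> 0 \<longrightarrow>
          \<bar>(SUP x\<in>X. \<phi> x + \<delta> * \<psi> x) - (\<phi> x0 + \<delta> * \<psi> x0)\<bar>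
            \<le> L * \<delta> * sqrt (2 * \<delta> * ((SUP x\<in>X. \<psi> x) - (INF x\<in>X. \<psi> x)) / c))"
proof -
  obtain x0 where x0: "x0 \<in> X" "\<forall>x\<in>X. \<phi> x \<le> \<phi> x0"
    using usc_on_attains_max[OF assms(1,2,4)] by blast
  have unique: "\<forall>y\<in>X. (\<forall>x\<in>X. \<phi> x \<le> \<phi> y) \<longrightarrow> y = x0"
    using strongly_concave_on_max_unique[OF assms(6,5) x0] by blast
  have growth: "\<forall>x\<in>X. c / 2 * (norm (x - x0))\<^sup>2 \<le> \<phi> x0 - \<phi> x"
    using strongly_concave_on_max_quadratic_growth[OF assms(6) x0] by blast
  have "bounded (\<psi> ` X)"
    using compact_continuous_image[OF lipschitz_on_continuous_on[OF assms(7)] assms(2)]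
    by (rule compact_imp_bounded)
  then have osc: "\<forall>x\<in>X. \<psi> x - \<psi> x0 \<le> (SUP x\<in>X. \<psi> x) - (INF x\<in>X. \<psi> x)"
    using diff_le_SUP_minus_INF x0(1) by fast
  have "\<bar>(SUP x\<in>X. \<phi> x + \<delta> * \<psi> x) - (\<phi> x0 + \<delta> * \<psi> x0)\<bar>
          \<le> L * \<delta> * sqrt (2 * \<delta> * ((SUP x\<in>X. \<psi> x) - (INF x\<in>X. \<psi> x)) / c)"
    if "\<delta> \<ge> 0" for \<delta>
    using perturbed_value_le[OF growth osc assms(5) that assms(7) x0(1)]
    by (intro abs_cSUP_diff_le[OF x0(1)] ballI)
  with x0 unique show ?thesis
    by blast
qed

end
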